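(* Consider the system $x_{t+1}^{(i)} = f_0(x_t^{(i)}) + B(x_t^{(i)})u_t^{(i)} - f(x_t^{(i)},c^{(i)}) + w_t^{(i)}$, $x_1^{(i)}=0$, for $i=1,\dots,N$, $t=1,\dots,T$, under the standing assumptions in the context (full actuation, $\|w_t^{(i)}\|\le W$, e-ISS of $f_0$ with constants $\beta,\gamma,\rho$). Suppose $f(x,c)=Y_1(x)\Theta+Y_2(x)c$ with known $Y_1:\mathbb{R}^n\to\mathbb{R}^{n\times p}$, $Y_2:\mathbb{R}^n\to\mathbb{R}^{n\times h}$, $\|Y_1(x)\|\le K_1$, $\|Y_2(x)\|\le K_2$ for all $x$, and unknown $\Theta\in\mathbb{R}^p$, $c^{(i)}\in\mathbb{R}^h$ with $\|\Theta\|\le K_\Theta$, $\|c^{(i)}\|\le K_c$ for all $i$. Let $\mathcal{K}_1=\{\hat\Theta:\|\hat\Theta\|\le K_\Theta\}$, $\mathcal{K}_2=\{\hat c:\|\hat c\|\le K_c\}$, and define $$C_1=4K_1^2K_\Theta+4K_1K_2K_c+2K_1W,\qquad C_2=4K_2^2K_c+4K_1K_2K_\Theta+2K_2W.$$ (a) OMAC with $\hat f_t^{(i)}=Y_1(x_t^{(i)})\hat\Theta^{(i)}+Y_2(x_t^{(i)})\hat c_t^{(i)}$, using projected online gradient descent for both adapters with learning rates $\bar\eta^{(i)}=\frac{2K_\Theta}{C_1T\sqrt{i}}$ (outer) and $\eta_t^{(i)}=\frac{2K_c}{C_2\sqrt t}$ (inner), satisfies $$\mathsf{ACE}(\mathrm{OMAC})\le\frac{\gamma}{1-\rho}\sqrt{W^2+3\Big(K_\Theta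 C_1\frac{1}{\sqrt N}+K_cC_2\frac{1}{\sqrt T}\Big)}.$$ (b) The baseline adaptive controller, which adapts $\hat\alpha=[\hat\Theta;\hat c]$ jointly at every time step by projected online gradient descent, satisfies $$\mathsf{ACE}(\mathrm{baseline})\le\frac{\gamma}{1-\rho}\sqrt{W^2+3\sqrt{K_\Theta^2+K_c^2}\sqrt{C_1^2+C_2^2}\frac{1}{\sqrt T}}.$$
   Context: Standing assumptions: $x_t^{(i)}\in\mathbb{R}^n$, $u_t^{(i)}\in\mathbb{R}^m$; $f_0:\mathbb{R}^n\to\mathbb{R}^n$ and $B:\mathbb{R}^n\to\mathbb{R}^{n\times m}$ known with $\mathrm{rank}(B(x))=n$ for all $x$; disturbances $w_t^{(i)}$ (possibly adversarial) with $\|w_t^{(i)}\|\le W$; $c^{(i)}$ may be chosen adversarially. $f_0$ is e-ISS: there exist $\beta,\gamma\ge0$, $0\le\rho<1$ such that for every $t$ and $v_1,\dots,v_{t-1}\in\mathbb{R}^n$ the iterates $x_{k+1}=f_0(x_k)+v_k$ satisfy $\|x_t\|\le\beta\rho^{t-1}\|x_1\|+\gamma\sum_{k=1}^{t-1}\rho^{t-1-k}\|v_k\|$. $\|\cdot\|$ is the Euclidean norm for vectors and spectral norm for matrices. $\mathsf{ACE}=\frac1{TN}\sum_{i=1}^N\sum_{t=1}^T\|x_t^{(i)}\|$. Both controllers are certainty-equivalence: at step $(i,t)$ they compute an estimate $\hat f_t^{(i)}$ and apply $u_t^{(i)}=B(x_t^{(i)})^{\dagger}\hat f_t^{(i)}$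 (pseudo-inverse); then they observe $y_t^{(i)}=f_0(x_t^{(i)})+B(x_t^{(i)})u_t^{(i)}-x_{t+1}^{(i)}=f(x_t^{(i)},c^{(i)})-w_t^{(i)}$. Loss: $\ell_t^{(i)}(\hat\Theta,\hat c)=\|Y_1(x_t^{(i)})\hat\Theta+Y_2(x_t^{(i)})\hat c-y_t^{(i)}\|^2$. Projected OGD on a convex set $\mathcal{K}$ with step sizes $\eta_t$: start at a point of $\mathcal{K}$, update $z_{t+1}=\Pi_{\mathcal{K}}(z_t-\eta_t\nabla_t)$ where $\Pi_{\mathcal{K}}$ is Euclidean projection and $\nabla_t$ the gradient of the current cost at $z_t$. OMAC in (a): $\hat\Theta^{(1)}\in\mathcal{K}_1$; in each environment $i$, $\hat c_1^{(i)}\in\mathcal{K}_2$ and $\hat c_{t+1}^{(i)}=\Pi_{\mathcal{K}_2}(\hat c_t^{(i)}-\eta_t^{(i)}\nabla_{\hat c}\ell_t^{(i)}(\hat\Theta^{(i)},\hat c_t^{(i)}))$; after environment $i$, $\hat\Theta^{(i+1)}=\Pi_{\mathcal{K}_1}(\hat\Theta^{(i)}-\bar\eta^{(i)}\sum_{t=1}^T\nabla_{\hat\Theta}\ell_t^{(i)}(\hat\Theta^{(i)},\hat c_t^{(i)}))$. The $c^{(i)}$ are never observed. Baseline in (b): $\hat f_t^{(i)}=Y_1(x_t^{(i)})\hat\Theta_t^{(i)}+Y_2(x_t^{(i)})\hat c_t^{(i)}$, where in each environment $\hat\alpha_t^{(i)}=[\hat\Theta_t^{(i)};\hat c_t^{(i)}]$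 starts in $\bar{\mathcal{K}}=\{[\hat\Theta;\hat c]:\|\hat\Theta\|\le K_\Theta,\|\hat c\|\le K_c\}$ and is updated every step by projected OGD on $\bar{\mathcal K}$ for the loss $\ell_t^{(i)}$ viewed as a function of $\hat\alpha$, with step sizes $\frac{2\sqrt{K_\Theta^2+K_c^2}}{\sqrt{C_1^2+C_2^2}\sqrt t}$. *)

theory Defs
  imports "HOL-Analysis.Analysis"
begin

text \<open>State space R^n = real^'n, input space R^m = real^'m,
  Theta in R^p = real^'p, environment parameter c in R^h = real^'h.
  A matrix in R^(a x b) is an element of real^'b^'a, applied to vectors with *v.
  Environments i = 1..N and times t = 1..T are natural numbers starting at 1.
  Disturbances are given as w i t, environment parameters as c i.
  Trajectory functions below are indexed by k = t - 1 (index 0 is time 1).\<close>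

definition pinv :: "real^'m^'n \<Rightarrow> real^'n^'m" where
  "pinv A = (THE X. A ** X ** A = A \<and> X ** A ** X = X \<and>
                    transpose (A ** X) = A ** X \<and> transpose (X ** A) = X ** A)"

definition specnorm :: "real^'a^'b \<Rightarrow> real" where
  "specnorm A = onorm (\<lambda>v. A *v v)"

definition projball :: "real \<Rightarrow> 'a::euclidean_space \<Rightarrow> 'a" where
  "projball K z = closest_point (cball 0 K) z"

definition model ::
  "(real^'n \<Rightarrow> real^'p^'n) \<Rightarrow> (real^'n \<Rightarrow> real^'h^'n) \<Rightarrow> real^'n \<Rightarrow> real^'p \<Rightarrow> real^'h \<Rightarrow> real^'n"
  where "model Y1 Y2 x th cc = Y1 x *v th + Y2 x *v cc"

definition ce_input :: "(real^'n \<Rightarrow> real^'m^'n) \<Rightarrow> real^'n \<Rightarrow> real^'n \<Rightarrow> real^'m" where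
  "ce_input B x fh = pinv (B x) *v fh"

definition plant_next ::
  "(real^'n \<Rightarrow> real^'n) \<Rightarrow> (real^'n \<Rightarrow> real^'m^'n) \<Rightarrow> (real^'n \<Rightarrow> real^'p^'n) \<Rightarrow>
   (real^'n \<Rightarrow> real^'h^'n) \<Rightarrow> real^'p \<Rightarrow> real^'h \<Rightarrow> real^'n \<Rightarrow> real^'n \<Rightarrow> real^'m \<Rightarrow> real^'n" where
  "plant_next f0 B Y1 Y2 Th cc wv x u = f0 x + B x *v u - model Y1 Y2 x Th cc + wv"

definition observe ::
  "(real^'n \<Rightarrow> real^'n) \<Rightarrow> (real^'n \<Rightarrow> real^'m^'n) \<Rightarrow> real^'n \<Rightarrow> real^'m \<Rightarrow> real^'n \<Rightarrow> real^'n" where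
  "observe f0 B x u x' = f0 x + B x *v u - x'"

definition loss ::
  "(real^'n \<Rightarrow> real^'p^'n) \<Rightarrow> (real^'n \<Rightarrow> real^'h^'n) \<Rightarrow> real^'n \<Rightarrow> real^'n \<Rightarrow> real^'p \<Rightarrow> real^'h \<Rightarrow> real" where
  "loss Y1 Y2 x y thh ch = (norm (Y1 x *v thh + Y2 x *v ch - y))\<^sup>2"

definition grad_theta ::
  "(real^'n \<Rightarrow> real^'p^'n) \<Rightarrow> (real^'n \<Rightarrow> real^'h^'n) \<Rightarrow> real^'n \<Rightarrow> real^'n \<Rightarrow> real^'p \<Rightarrow> real^'h \<Rightarrow> real^'p" where
  "grad_theta Y1 Y2 x y thh ch = 2 *\<^sub>R (transpose (Y1 x) *v (Y1 x *v thh + Y2 x *v ch - y))"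

definition grad_c ::
  "(real^'n \<Rightarrow> real^'p^'n) \<Rightarrow> (real^'n \<Rightarrow> real^'h^'n) \<Rightarrow> real^'n \<Rightarrow> real^'n \<Rightarrow> real^'p \<Rightarrow> real^'h \<Rightarrow> real^'h" where
  "grad_c Y1 Y2 x y thh ch = 2 *\<^sub>R (transpose (Y2 x) *v (Y1 x *v thh + Y2 x *v ch - y))"

definition omac_step ::
  "(real^'n \<Rightarrow> real^'n) \<Rightarrow> (real^'n \<Rightarrow> real^'m^'n) \<Rightarrow> (real^'n \<Rightarrow> real^'p^'n) \<Rightarrow>
   (real^'n \<Rightarrow> real^'h^'n) \<Rightarrow> real^'p \<Rightarrow> real \<Rightarrow> real \<Rightarrow> real^'h \<Rightarrow> (nat \<Rightarrow> real^'n) \<Rightarrow>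
   real^'p \<Rightarrow> nat \<Rightarrow> (real^'n) \<times> (real^'h) \<Rightarrow> (real^'n) \<times> (real^'h)" where
  "omac_step f0 B Y1 Y2 Th Kc C2 cc wi thh t s =
     (let x = fst s; ch = snd s;
          u = ce_input B x (Y1 x *v thh + Y2 x *v ch);
          x' = plant_next f0 B Y1 Y2 Th cc (wi t) x u;
          y = observe f0 B x u x';
          eta = 2 * Kc / (C2 * sqrt (real t))
      in (x', projball Kc (ch - eta *\<^sub>R grad_c Y1 Y2 x y thh ch)))"

primrec omac_env ::
  "(real^'n \<Rightarrow> real^'n) \<Rightarrow> (real^'n \<Rightarrow> real^'m^'n) \<Rightarrow> (real^'n \<Rightarrow> real^'p^'n) \<Rightarrow>
   (real^'n \<Rightarrow> real^'h^'n) \<Rightarrow> real^'p \<Rightarrow> real \<Rightarrow> real \<Rightarrow> real^'h \<Rightarrow> (nat \<Rightarrow> real^'n) \<Rightarrow>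
   real^'p \<Rightarrow> real^'h \<Rightarrow> nat \<Rightarrow> (real^'n) \<times> (real^'h)" where
  "omac_env f0 B Y1 Y2 Th Kc C2 cc wi thh ch1 0 = (0, ch1)"
| "omac_env f0 B Y1 Y2 Th Kc C2 cc wi thh ch1 (Suc k) =
     omac_step f0 B Y1 Y2 Th Kc C2 cc wi thh (Suc k) (omac_env f0 B Y1 Y2 Th Kc C2 cc wi thh ch1 k)"

definition omac_outer_grad ::
  "(real^'n \<Rightarrow> real^'n) \<Rightarrow> (real^'n \<Rightarrow> real^'m^'n) \<Rightarrow> (real^'n \<Rightarrow> real^'p^'n) \<Rightarrow>
   (real^'n \<Rightarrow> real^'h^'n) \<Rightarrow> real^'p \<Rightarrow> real \<Rightarrow> real \<Rightarrow> real^'h \<Rightarrow> (nat \<Rightarrow> real^'n) \<Rightarrow>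
   real^'p \<Rightarrow> real^'h \<Rightarrow> nat \<Rightarrow> real^'p" where
  "omac_outer_grad f0 B Y1 Y2 Th Kc C2 cc wi thh ch1 T =
     (\<Sum>t = 1..T.
        let s = omac_env f0 B Y1 Y2 Th Kc C2 cc wi thh ch1 (t - 1);
            x = fst s; ch = snd s;
            u = ce_input B x (Y1 x *v thh + Y2 x *v ch);
            x' = fst (omac_env f0 B Y1 Y2 Th Kc C2 cc wi thh ch1 t);
            y = observe f0 B x u x'
        in grad_theta Y1 Y2 x y thh ch)"

text \<open>Outer estimate Thetahat^(i) for environment i = j + 1.\<close>
primrec omac_theta ::
  "(real^'n \<Rightarrow> real^'n) \<Rightarrow> (real^'n \<Rightarrow> real^'m^'n) \<Rightarrow> (real^'n \<Rightarrow> real^'p^'n) \<Rightarrow>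
   (real^'n \<Rightarrow> real^'h^'n) \<Rightarrow> real^'p \<Rightarrow> real \<Rightarrow> real \<Rightarrow> real \<Rightarrow> real \<Rightarrow>
   (nat \<Rightarrow> real^'h) \<Rightarrow> (nat \<Rightarrow> nat \<Rightarrow> real^'n) \<Rightarrow> nat \<Rightarrow>
   real^'p \<Rightarrow> (nat \<Rightarrow> real^'h) \<Rightarrow> nat \<Rightarrow> real^'p" where
  "omac_theta f0 B Y1 Y2 Th KTh Kc C1 C2 c w T th1 ch1 0 = th1"
| "omac_theta f0 B Y1 Y2 Th KTh Kc C1 C2 c w T th1 ch1 (Suc j) =
     (let thh = omac_theta f0 B Y1 Y2 Th KTh Kc C1 C2 c w T th1 ch1 j;
          i = Suc j;
          etabar = 2 * KTh / (C1 * real T * sqrt (real i))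
      in projball KTh (thh - etabar *\<^sub>R
            omac_outer_grad f0 B Y1 Y2 Th Kc C2 (c i) (w i) thh (ch1 i) T))"

definition omac_x ::
  "(real^'n \<Rightarrow> real^'n) \<Rightarrow> (real^'n \<Rightarrow> real^'m^'n) \<Rightarrow> (real^'n \<Rightarrow> real^'p^'n) \<Rightarrow>
   (real^'n \<Rightarrow> real^'h^'n) \<Rightarrow> real^'p \<Rightarrow> real \<Rightarrow> real \<Rightarrow> real \<Rightarrow> real \<Rightarrow>
   (nat \<Rightarrow> real^'h) \<Rightarrow> (nat \<Rightarrow> nat \<Rightarrow> real^'n) \<Rightarrow> nat \<Rightarrow>
   real^'p \<Rightarrow> (nat \<Rightarrow> real^'h) \<Rightarrow> nat \<Rightarrow> nat \<Rightarrow> real^'n" where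
  "omac_x f0 B Y1 Y2 Th KTh Kc C1 C2 c w T th1 ch1 i t =
     fst (omac_env f0 B Y1 Y2 Th Kc C2 (c i) (w i)
            (omac_theta f0 B Y1 Y2 Th KTh Kc C1 C2 c w T th1 ch1 (i - 1)) (ch1 i) (t - 1))"

text \<open>One step of the baseline: state (x_t, (Thetahat_t, chat_t)); joint projected OGD on
  Kbar = cball 0 KTh x cball 0 Kc in R^p x R^h (Euclidean norm on the product).\<close>
definition base_step ::
  "(real^'n \<Rightarrow> real^'n) \<Rightarrow> (real^'n \<Rightarrow> real^'m^'n) \<Rightarrow> (real^'n \<Rightarrow> real^'p^'n) \<Rightarrow>
   (real^'n \<Rightarrow> real^'h^'n) \<Rightarrow> real^'p \<Rightarrow> real \<Rightarrow> real \<Rightarrow> real \<Rightarrow> real \<Rightarrow> real^'h \<Rightarrow> (nat \<Rightarrow> real^'n) \<Rightarrow>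
   nat \<Rightarrow> (real^'n) \<times> ((real^'p) \<times> (real^'h)) \<Rightarrow> (real^'n) \<times> ((real^'p) \<times> (real^'h))" where
  "base_step f0 B Y1 Y2 Th KTh Kc C1 C2 cc wi t s =
     (let x = fst s; thh = fst (snd s); ch = snd (snd s);
          u = ce_input B x (Y1 x *v thh + Y2 x *v ch);
          x' = plant_next f0 B Y1 Y2 Th cc (wi t) x u;
          y = observe f0 B x u x';
          eta = 2 * sqrt (KTh\<^sup>2 + Kc\<^sup>2) / (sqrt (C1\<^sup>2 + C2\<^sup>2) * sqrt (real t))
      in (x', closest_point (cball 0 KTh \<times> cball 0 Kc)
                 ((thh, ch) - eta *\<^sub>R (grad_theta Y1 Y2 x y thh ch, grad_c Y1 Y2 x y thh ch))))"

primrec base_env ::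
  "(real^'n \<Rightarrow> real^'n) \<Rightarrow> (real^'n \<Rightarrow> real^'m^'n) \<Rightarrow> (real^'n \<Rightarrow> real^'p^'n) \<Rightarrow>
   (real^'n \<Rightarrow> real^'h^'n) \<Rightarrow> real^'p \<Rightarrow> real \<Rightarrow> real \<Rightarrow> real \<Rightarrow> real \<Rightarrow> real^'h \<Rightarrow> (nat \<Rightarrow> real^'n) \<Rightarrow>
   (real^'p) \<times> (real^'h) \<Rightarrow> nat \<Rightarrow> (real^'n) \<times> ((real^'p) \<times> (real^'h))" where
  "base_env f0 B Y1 Y2 Th KTh Kc C1 C2 cc wi a1 0 = (0, a1)"
| "base_env f0 B Y1 Y2 Th KTh Kc C1 C2 cc wi a1 (Suc k) =
     base_step f0 B Y1 Y2 Th KTh Kc C1 C2 cc wi (Suc k) (base_env f0 B Y1 Y2 Th KTh Kc C1 C2 cc wi a1 k)"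

definition base_x ::
  "(real^'n \<Rightarrow> real^'n) \<Rightarrow> (real^'n \<Rightarrow> real^'m^'n) \<Rightarrow> (real^'n \<Rightarrow> real^'p^'n) \<Rightarrow>
   (real^'n \<Rightarrow> real^'h^'n) \<Rightarrow> real^'p \<Rightarrow> real \<Rightarrow> real \<Rightarrow> real \<Rightarrow> real \<Rightarrow>
   (nat \<Rightarrow> real^'h) \<Rightarrow> (nat \<Rightarrow> nat \<Rightarrow> real^'n) \<Rightarrow> (nat \<Rightarrow> (real^'p) \<times> (real^'h)) \<Rightarrow> nat \<Rightarrow> nat \<Rightarrow> real^'n" where
  "base_x f0 B Y1 Y2 Th KTh Kc C1 C2 c w a1 i t =
     fst (base_env f0 B Y1 Y2 Th KTh Kc C1 C2 (c i) (w i) (a1 i) (t - 1))"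

definition ACE :: "nat \<Rightarrow> nat \<Rightarrow> (nat \<Rightarrow> nat \<Rightarrow> real^'n) \<Rightarrow> real" where
  "ACE N T x = (\<Sum>i = 1..N. \<Sum>t = 1..T. norm (x i t)) / (real T * real N)"

definition eISS :: "(real^'n \<Rightarrow> real^'n) \<Rightarrow> real \<Rightarrow> real \<Rightarrow> real \<Rightarrow> bool" where
  "eISS f0 \<beta> \<gamma> \<rho> \<longleftrightarrow> \<beta> \<ge> 0 \<and> \<gamma> \<ge> 0 \<and> 0 \<le> \<rho> \<and> \<rho> < 1 \<and>
     (\<forall>(xs :: nat \<Rightarrow> real^'n) (v :: nat \<Rightarrow> real^'n).
        (\<forall>k\<ge>1. xs (Suc k) = f0 (xs k) + v k) \<longrightarrow>
        (\<forall>t\<ge>1. norm (xs t) \<le> \<beta> * \<rho> ^ (t - 1) * norm (xs 1)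
                              + \<gamma> * (\<Sum>k = 1..t - 1. \<rho> ^ (t - 1 - k) * norm (v k))))"

end

theory Submission
  imports Defs
begin

text \<open>With full actuation the certainty-equivalence input realizes \<open>B(x) u = fhat\<close>
  exactly, so the closed loop is \<open>x\<^sub>t\<^sub>+\<^sub>1 = f\<^sub>0(x\<^sub>t) + r\<^sub>t\<close>, where
  \<open>r\<^sub>t = fhat\<^sub>t - f(x\<^sub>t, c) + w\<^sub>t\<close> is the prediction error on the observation \<open>y\<^sub>t\<close>.
  Exponential ISS bounds \<open>\<Sum>\<parallel>x\<^sub>t\<parallel>\<close> by \<open>\<gamma>/(1-\<rho>) \<Sum>\<parallel>r\<^sub>t\<parallel>\<close>, and Cauchy-Schwarz reduces
  the ACE to the root mean square of the \<open>r\<^sub>t\<close>. Convexity of the squared loss gives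
  \<open>\<parallel>r\<^sub>t\<parallel>\<^sup>2 \<le> \<parallel>w\<^sub>t\<parallel>\<^sup>2 + \<langle>\<nabla>\<ell>\<^sub>t, estimate - truth\<rangle>\<close>, so the mean square is at most \<open>W\<^sup>2\<close>
  plus the linearized regret of the adaptation law, which projected online gradient
  descent keeps at \<open>3 R G \<surd>T\<close> (radius \<open>R\<close>, gradient bound \<open>G\<close>). For OMAC the regret
  splits into the inner descent on \<open>c\<close> in each environment and the outer descent on \<open>\<Theta>\<close>,
  whose gradient is the sum of the \<open>T\<close> per-step gradients of an environment; the baseline
  runs a single descent on the product ball.\<close>

section \<open>Pseudo-inverse and spectral norm\<close>

lemma penrose_conditions_unique:
  fixes A :: "real^'m^'n" and X Y :: "real^'n^'m"
  assumes X: "A ** X ** A = A" "X ** A ** X = X" "transpose (A ** X) = A ** X" "transpose (X ** A) = X ** A"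
    and Y: "A ** Y ** A = A" "Y ** A ** Y = Y" "transpose (A ** Y) = A ** Y" "transpose (Y ** A) = Y ** A"
  shows "X = Y"
proof -
  have AtYA: "transpose A ** A ** Y = transpose A"
    by (metis Y(1,3) matrix_transpose_mul matrix_mul_assoc)
  have XAAt: "X ** A ** transpose A = transpose A"
    by (metis X(1,4) matrix_transpose_mul matrix_mul_assoc)
  have "X = X ** transpose X ** transpose A"
    by (metis X(2,3) matrix_transpose_mul matrix_mul_assoc)
  also have "\<dots> = X ** transpose X ** transpose A ** A ** Y"
    by (metis AtYA matrix_mul_assoc)
  also have "\<dots> = X ** A ** Y"
    by (metis X(2,3) matrix_transpose_mul matrix_mul_assoc)
  also have "\<dots> = X ** A ** transpose A ** transpose Y ** Y"
    by (metis Y(2,4) matrix_transpose_mul matrix_mul_assoc)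
  also have "\<dots> = Y"
    by (metis XAAt Y(2,4) matrix_transpose_mul matrix_mul_assoc)
  finally show ?thesis .
qed

lemma pinv_eqI:
  fixes A :: "real^'m^'n" and X :: "real^'n^'m"
  assumes "A ** X ** A = A" "X ** A ** X = X" "transpose (A ** X) = A ** X" "transpose (X ** A) = X ** A"
  shows "pinv A = X"
  unfolding pinv_def using assms penrose_conditions_unique[of A X] by (intro the_equality) blast+

text \<open>For full row rank the pseudo-inverse is the right inverse
  \<open>B\<^sup>T (B B\<^sup>T)\<^sup>-\<^sup>1\<close>.\<close>
lemma pinv_right_inverse:
  fixes B :: "real^'m^'n"
  assumes "rank B = CARD('n)"
  shows "B ** pinv B = mat 1"
proof -
  define M where "M = B ** transpose B"
  have "inj ((*v) (transpose B))"
    using assms by (simp add: full_rank_injective[symmetric] rank_transpose)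
  moreover have "(transpose B *v v) \<bullet> (transpose B *v v) = v \<bullet> (M *v v)" for v
    unfolding M_def by (metis dot_lmul_matrix matrix_vector_mul_assoc transpose_matrix_vector)
  ultimately have "\<forall>v. M *v v = 0 \<longrightarrow> v = 0"
    by (metis inner_eq_zero_iff inner_zero_right matrix_vector_mult_0_right injD)
  then obtain Mi where MiM: "Mi ** M = mat 1"
    using matrix_left_invertible_ker by blast
  then have MMi: "M ** Mi = mat 1"
    using matrix_left_right_inverse by blast
  have "transpose M = M"
    unfolding M_def by (simp add: matrix_transpose_mul)
  then have "transpose Mi ** M = mat 1"
    by (metis MMi matrix_transpose_mul transpose_mat)
  then have Mi_sym: "transpose Mi = Mi"
    by (metis MMi matrix_mul_assoc matrix_mul_lid matrix_mul_rid)
  define X where "X = transpose B ** Mi"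
  have BX: "B ** X = mat 1"
    unfolding X_def M_def by (metis MMi M_def matrix_mul_assoc)
  have XB_sym: "transpose (X ** B) = X ** B"
    unfolding X_def by (simp add: matrix_transpose_mul Mi_sym matrix_mul_assoc)
  have "pinv B = X"
  proof (rule pinv_eqI)
    show "B ** X ** B = B" "transpose (B ** X) = B ** X"
      by (simp_all add: BX)
    show "X ** B ** X = X"
      by (metis BX matrix_mul_assoc matrix_mul_rid)
  qed (fact XB_sym)
  with BX show ?thesis by simp
qed

lemma specnorm_nonneg: "0 \<le> specnorm (A :: real^'a^'b)"
  unfolding specnorm_def by (rule onorm_pos_le) (rule matrix_vector_mul_bounded_linear)

lemma norm_matrix_vector_le_specnorm: "norm (A *v v) \<le> specnorm A * norm v"
  unfolding specnorm_def by (rule onorm) (rule matrix_vector_mul_bounded_linear)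

lemma norm_transpose_vector_le_specnorm:
  fixes A :: "real^'a^'b"
  shows "norm (transpose A *v v) \<le> specnorm A * norm v"
proof -
  define q where "q = transpose A *v v"
  have "(norm q)\<^sup>2 = v \<bullet> (A *v q)"
    unfolding q_def by (simp add: power2_norm_eq_inner dot_lmul_matrix)
  also have "\<dots> \<le> norm v * norm (A *v q)"
    by (rule norm_cauchy_schwarz)
  also have "\<dots> \<le> norm v * (specnorm A * norm q)"
    by (intro mult_left_mono norm_matrix_vector_le_specnorm) simp
  finally have "norm q * norm q \<le> (specnorm A * norm v) * norm q"
    by (simp add: power2_eq_square algebra_simps)
  then show ?thesis
    unfolding q_def[symmetric]
    by (cases "norm q = 0") (simp_all add: specnorm_nonneg)
qed

section \<open>Projected online gradient descent\<close>

lemma sum_inverse_sqrt_le: "(\<Sum>t = 1..T. 1 / sqrt (real t)) \<le> 2 * sqrt (real T)"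
proof (induction T)
  case (Suc T)
  have "sqrt (real T) * sqrt (real T + 1) = sqrt (real T * (real T + 1))"
    by (simp add: real_sqrt_mult)
  also have "\<dots> \<le> sqrt ((real T + 1 / 2)\<^sup>2)"
    by (rule real_sqrt_le_mono) (simp add: power2_eq_square algebra_simps)
  finally have "sqrt (real T) * sqrt (real T + 1) \<le> real T + 1 / 2"
    by simp
  then have "1 \<le> (2 * sqrt (real (Suc T)) - 2 * sqrt (real T)) * sqrt (real (Suc T))"
    by (simp add: algebra_simps)
  then have "1 / sqrt (real (Suc T)) \<le> 2 * sqrt (real (Suc T)) - 2 * sqrt (real T)"
    by (simp add: divide_le_eq mult.commute)
  with Suc show ?case by simp
qed simp

lemma sum_weighted_telescope_le:
  fixes d a :: "nat \<Rightarrow> real"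
  assumes d: "\<And>t. t \<ge> 1 \<Longrightarrow> 0 \<le> d t \<and> d t \<le> D"
    and a: "mono a" "\<And>t. 0 \<le> a t"
  shows "(\<Sum>t = 1..T. (d t - d (Suc t)) * a t) \<le> D * a T"
proof -
  have "(\<Sum>t = 1..T. (d t - d (Suc t)) * a t) \<le> (D - d (Suc T)) * a T"
  proof (induction T)
    case 0
    show ?case using d[of 1] a by simp
  next
    case (Suc T)
    have "d (Suc T) * (a (Suc T) - a T) \<le> D * (a (Suc T) - a T)"
      using d[of "Suc T"] a by (intro mult_right_mono) (auto simp: mono_def)
    with Suc.IH show ?case
      by (simp add: algebra_simps)
  qed
  also have "\<dots> \<le> D * a T"
    using d[of "Suc T"] a by (simp add: algebra_simps)
  finally show ?thesis .
qed

lemma closest_point_step_sq_dist_le: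
  fixes S :: "'a::euclidean_space set"
  assumes "convex S" "closed S" "zs \<in> S"
  shows "(norm (closest_point S (z - \<eta> *\<^sub>R g) - zs))\<^sup>2
           \<le> (norm (z - zs))\<^sup>2 - 2 * \<eta> * (g \<bullet> (z - zs)) + \<eta>\<^sup>2 * (norm g)\<^sup>2"
proof -
  have "norm (closest_point S (z - \<eta> *\<^sub>R g) - zs) \<le> norm ((z - zs) - \<eta> *\<^sub>R g)"
    using closest_point_lipschitz[of S "z - \<eta> *\<^sub>R g" zs] closest_point_self[of zs S] assms
    by (auto simp: dist_norm algebra_simps)
  then have "(norm (closest_point S (z - \<eta> *\<^sub>R g) - zs))\<^sup>2 \<le> (norm ((z - zs) - \<eta> *\<^sub>R g))\<^sup>2"
    by (simp add: power_mono)
  also have "\<dots> = (norm (z - zs))\<^sup>2 - 2 * \<eta> * (g \<bullet> (z - zs)) + \<eta>\<^sup>2 * (norm g)\<^sup>2"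
    using dot_norm_neg[of "z - zs" "\<eta> *\<^sub>R g"] by (simp add: power_mult_distrib inner_commute)
  finally show ?thesis .
qed

lemma Times_cball_subset_cball:
  "cball (0::'a::real_normed_vector) r \<times> cball (0::'b::real_normed_vector) s \<subseteq> cball 0 (sqrt (r\<^sup>2 + s\<^sup>2))"
  by (auto simp: norm_Pair intro!: real_sqrt_le_mono add_mono power_mono)

text \<open>Since \<open>x / 0 = 0\<close>, the step size is \<open>0\<close> when \<open>G = 0\<close>; the bound then holds
  because all gradients vanish.\<close>

lemma projected_ogd_regret:
  fixes z g :: "nat \<Rightarrow> 'a::euclidean_space"
  assumes S: "convex S" "closed S" "S \<subseteq> cball 0 R"
    and z1: "z 1 \<in> S"
    and descent: "\<And>t. t \<ge> 1 \<Longrightarrow> z (Suc t) = closest_point S (z t - (2 * R / (G * sqrt (real t))) *\<^sub>R g t)"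
    and g: "\<And>t. t \<ge> 1 \<Longrightarrow> norm (g t) \<le> G"
    and zs: "zs \<in> S"
  shows "(\<Sum>t = 1..T. g t \<bullet> (z t - zs)) \<le> 3 * R * G * sqrt (real T)"
proof -
  have z_in: "z t \<in> S" if "t \<ge> 1" for t
    using that
  proof (induction t rule: dec_induct)
    case (step t)
    then show ?case
      using descent[of t] closest_point_in_set[of S] S(2) zs by auto
  qed (fact z1)
  have dist_zs: "norm (z t - zs) \<le> 2 * R" if "t \<ge> 1" for t
  proof -
    have "norm (z t) \<le> R" "norm zs \<le> R"
      using S(3) z_in[OF that] zs by auto
    then show ?thesis
      using norm_triangle_ineq4[of "z t" zs] by linarith
  qed
  have "R \<ge> 0" "G \<ge> 0"
    using dist_zs[of 1] g[of 1] norm_ge_zero[of "z 1 - zs"] norm_ge_zero[of "g 1"] by linarith+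
  then consider "R = 0" | "G = 0" | "R > 0" "G > 0"
    by fastforce
  then show ?thesis
  proof cases
    case 1
    then show ?thesis
      using dist_zs by (simp add: sum.neutral)
  next
    case 2
    then show ?thesis
      using g by (simp add: sum.neutral)
  next
    case 3
    define d where "d t = (norm (z t - zs))\<^sup>2" for t
    have regret_step: "g t \<bullet> (z t - zs)
        \<le> (d t - d (Suc t)) * sqrt (real t) * (G / (4 * R)) + R * G * (1 / sqrt (real t))"
      if t: "t \<ge> 1" for t
    proof -
      define \<eta> where "\<eta> = 2 * R / (G * sqrt (real t))"
      have "\<eta> > 0"
        using 3 t by (simp add: \<eta>_def)
      have "d (Suc t) \<le> d t - 2 * \<eta> * (g t \<bullet> (z t - zs)) + \<eta>\<^sup>2 * (norm (g t))\<^sup>2"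
        unfolding d_def descent[OF t] \<eta>_def[symmetric]
        by (rule closest_point_step_sq_dist_le[OF S(1,2) zs])
      also have "\<dots> \<le> d t - 2 * \<eta> * (g t \<bullet> (z t - zs)) + \<eta>\<^sup>2 * G\<^sup>2"
        using g[OF t] by (simp add: mult_left_mono power_mono)
      finally have "g t \<bullet> (z t - zs) \<le> (d t - d (Suc t)) / (2 * \<eta>) + \<eta> * G\<^sup>2 / 2"
        using \<open>\<eta> > 0\<close> by (simp add: field_simps power2_eq_square)
      then show ?thesis
        using 3 t by (simp add: \<eta>_def field_simps power2_eq_square)
    qed
    have "(\<Sum>t = 1..T. g t \<bullet> (z t - zs))
        \<le> (\<Sum>t = 1..T. (d t - d (Suc t)) * sqrt (real t) * (G / (4 * R)) + R * G * (1 / sqrt (real t)))"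
      using regret_step by (intro sum_mono) simp
    also have "\<dots> = (\<Sum>t = 1..T. (d t - d (Suc t)) * sqrt (real t)) * (G / (4 * R))
           + R * G * (\<Sum>t = 1..T. 1 / sqrt (real t))"
      by (simp only: sum.distrib sum_distrib_left sum_distrib_right)
    also have "\<dots> \<le> ((2 * R)\<^sup>2 * sqrt (real T)) * (G / (4 * R)) + R * G * (2 * sqrt (real T))"
    proof (intro add_mono mult_right_mono mult_left_mono)
      show "(\<Sum>t = 1..T. (d t - d (Suc t)) * sqrt (real t)) \<le> (2 * R)\<^sup>2 * sqrt (real T)"
      proof (rule sum_weighted_telescope_le)
        show "0 \<le> d t \<and> d t \<le> (2 * R)\<^sup>2" if "t \<ge> 1" for t
          using power_mono[OF dist_zs[OF that] norm_ge_zero, of 2] by (simp add: d_def)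
      qed (auto simp: mono_def)
    qed (use 3 sum_inverse_sqrt_le in auto)
    also have "\<dots> = 3 * R * G * sqrt (real T)"
      using 3 by (simp add: field_simps power2_eq_square)
    finally show ?thesis .
  qed
qed

section \<open>Exponential input-to-state stability\<close>

lemma sum_geometric_convolution_le:
  fixes a :: "nat \<Rightarrow> real"
  assumes "0 \<le> \<rho>" "\<rho> < 1" "\<And>k. 0 \<le> a k"
  shows "(\<Sum>t = 1..T. \<Sum>k = 1..t - 1. \<rho> ^ (t - 1 - k) * a k) \<le> (\<Sum>k = 1..T. a k) / (1 - \<rho>)"
proof -
  define S where "S T = (\<Sum>t = 1..T. \<Sum>k = 1..t - 1. \<rho> ^ (t - 1 - k) * a k)" for T
  define I where "I T = (\<Sum>k = 1..T. \<rho> ^ (T - k) * a k)" for T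
  have "(1 - \<rho>) * S T + I T = (\<Sum>k = 1..T. a k)" for T
  proof (induction T)
    case (Suc T)
    have "(\<Sum>k = 1..T. \<rho> ^ (Suc T - k) * a k) = \<rho> * I T"
      unfolding I_def sum_distrib_left by (rule sum.cong) (auto simp: Suc_diff_le)
    then have "I (Suc T) = \<rho> * I T + a (Suc T)"
      by (simp add: I_def)
    moreover have "S (Suc T) = S T + I T"
      by (simp add: S_def I_def)
    ultimately have "(1 - \<rho>) * S (Suc T) + I (Suc T) = ((1 - \<rho>) * S T + I T) + a (Suc T)"
      by (simp add: algebra_simps)
    with Suc.IH show ?case
      by simp
  qed (simp add: S_def I_def)
  moreover have "I T \<ge> 0"
    unfolding I_def using assms by (intro sum_nonneg) simp
  ultimately have "(1 - \<rho>) * S T \<le> (\<Sum>k = 1..T. a k)"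
    by (metis le_add_same_cancel1)
  then show ?thesis
    using assms unfolding S_def by (simp add: pos_le_divide_eq mult.commute)
qed

text \<open>Every trajectory is driven by its own residuals \<open>v\<^sub>t = x\<^sub>t\<^sub>+\<^sub>1 - f\<^sub>0(x\<^sub>t)\<close>.\<close>
lemma eISS_sum_norm_le:
  fixes x :: "nat \<Rightarrow> real^'n"
  assumes iss: "eISS f0 \<beta> \<gamma> \<rho>" and x1: "x 1 = 0"
  shows "(\<Sum>t = 1..T. norm (x t)) \<le> \<gamma> / (1 - \<rho>) * (\<Sum>t = 1..T. norm (x (Suc t) - f0 (x t)))"
proof -
  define v where "v k = x (Suc k) - f0 (x k)" for k
  have \<gamma>: "\<gamma> \<ge> 0" and \<rho>: "0 \<le> \<rho>" "\<rho> < 1"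
    using iss by (auto simp: eISS_def)
  have "\<forall>k\<ge>1. x (Suc k) = f0 (x k) + v k"
    by (simp add: v_def)
  then have "norm (x t) \<le> \<beta> * \<rho> ^ (t - 1) * norm (x 1) + \<gamma> * (\<Sum>k = 1..t - 1. \<rho> ^ (t - 1 - k) * norm (v k))"
    if "t \<ge> 1" for t
    using iss that unfolding eISS_def by blast
  then have bound: "norm (x t) \<le> \<gamma> * (\<Sum>k = 1..t - 1. \<rho> ^ (t - 1 - k) * norm (v k))" if "t \<ge> 1" for t
    using that x1 by simp
  have "(\<Sum>t = 1..T. norm (x t)) \<le> (\<Sum>t = 1..T. \<gamma> * (\<Sum>k = 1..t - 1. \<rho> ^ (t - 1 - k) * norm (v k)))"
    by (rule sum_mono) (rule bound, simp)
  also have "\<dots> = \<gamma> * (\<Sum>t = 1..T. \<Sum>k = 1..t - 1. \<rho> ^ (t - 1 - k) * norm (v k))"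
    by (simp only: sum_distrib_left)
  also have "\<dots> \<le> \<gamma> * ((\<Sum>k = 1..T. norm (v k)) / (1 - \<rho>))"
    using sum_geometric_convolution_le[OF \<rho>, of "\<lambda>k. norm (v k)" T] \<gamma> by (intro mult_left_mono) auto
  finally show ?thesis
    by (simp add: v_def)
qed

lemma sum_le_sqrt_card_mult_sqrt_sum_sq:
  fixes f :: "'a \<Rightarrow> real"
  assumes "finite A" "\<And>a. a \<in> A \<Longrightarrow> 0 \<le> f a"
  shows "(\<Sum>a\<in>A. f a) \<le> sqrt (real (card A)) * sqrt (\<Sum>a\<in>A. (f a)\<^sup>2)"
  using L2_set_mult_ineq[of "\<lambda>_. 1" f A] assms
  by (simp add: L2_set_def L2_set_constant[of 1, unfolded L2_set_def, simplified])

lemma ACE_le_sqrt_mean_sq_residual: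
  fixes x :: "nat \<Rightarrow> nat \<Rightarrow> real^'n"
  assumes iss: "eISS f0 \<beta> \<gamma> \<rho>" and x1: "\<And>i. x i 1 = 0"
    and residual: "(\<Sum>i = 1..N. \<Sum>t = 1..T. (norm (x i (Suc t) - f0 (x i t)))\<^sup>2) \<le> real N * real T * E"
    and "N \<ge> 1" "T \<ge> 1"
  shows "ACE N T x \<le> \<gamma> / (1 - \<rho>) * sqrt E"
proof -
  define r where "r p = norm (x (fst p) (Suc (snd p)) - f0 (x (fst p) (snd p)))" for p
  define P where "P = {1..N} \<times> {1..T}"
  have NT: "real N * real T > 0"
    using assms by simp
  have "\<gamma> \<ge> 0" "\<rho> < 1"
    using iss by (auto simp: eISS_def)
  then have \<Gamma>: "\<gamma> / (1 - \<rho>) \<ge> 0"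
    by simp
  have "(\<Sum>i = 1..N. \<Sum>t = 1..T. norm (x i t)) \<le> (\<Sum>i = 1..N. \<gamma> / (1 - \<rho>) * (\<Sum>t = 1..T. r (i, t)))"
  proof (rule sum_mono)
    fix i
    show "(\<Sum>t = 1..T. norm (x i t)) \<le> \<gamma> / (1 - \<rho>) * (\<Sum>t = 1..T. r (i, t))"
      using eISS_sum_norm_le[OF iss, of "x i"] x1[of i] by (simp add: r_def)
  qed
  also have "\<dots> = \<gamma> / (1 - \<rho>) * (\<Sum>p\<in>P. r p)"
    by (simp add: P_def sum_distrib_left sum.cartesian_product split_def)
  also have "\<dots> \<le> \<gamma> / (1 - \<rho>) * (sqrt (real N * real T) * sqrt (real N * real T * E))"
  proof (intro mult_left_mono[OF _ \<Gamma>] order_trans[OF sum_le_sqrt_card_mult_sqrt_sum_sq])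
    have "(\<Sum>p\<in>P. (r p)\<^sup>2) \<le> real N * real T * E"
      using residual by (simp add: P_def r_def sum.cartesian_product split_def)
    then show "sqrt (real (card P)) * sqrt (\<Sum>p\<in>P. (r p)\<^sup>2) \<le> sqrt (real N * real T) * sqrt (real N * real T * E)"
      by (simp add: P_def card_cartesian_product mult_left_mono)
  qed (simp_all add: P_def r_def)
  also have "\<dots> = \<gamma> / (1 - \<rho>) * sqrt E * (real T * real N)"
    using NT by (simp add: real_sqrt_mult mult_ac)
  finally show ?thesis
    unfolding ACE_def using NT by (simp add: divide_le_eq mult_ac)
qed

section \<open>Certainty-equivalence adaptive control\<close>

lemma observe_plant_next [simp]:
  "observe f0 B x u (plant_next f0 B Y1 Y2 Th cc wv x u) = model Y1 Y2 x Th cc - wv"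
  by (simp add: observe_def plant_next_def)

lemma plant_next_ce_input:
  fixes B :: "real^'n \<Rightarrow> real^'m^'n"
  assumes "rank (B x) = CARD('n)"
  shows "plant_next f0 B Y1 Y2 Th cc wv x (ce_input B x fh) = f0 x + (fh - (model Y1 Y2 x Th cc - wv))"
  using pinv_right_inverse[OF assms]
  by (simp add: plant_next_def ce_input_def matrix_vector_mul_assoc)

lemma loss_le_linearization:
  "loss Y1 Y2 x y thh ch \<le> loss Y1 Y2 x y Th cc
     + grad_theta Y1 Y2 x y thh ch \<bullet> (thh - Th) + grad_c Y1 Y2 x y thh ch \<bullet> (ch - cc)"
proof -
  define e where "e = Y1 x *v thh + Y2 x *v ch - y"
  define d where "d = Y1 x *v (thh - Th) + Y2 x *v (ch - cc)"
  have "grad_theta Y1 Y2 x y thh ch \<bullet> (thh - Th) + grad_c Y1 Y2 x y thh ch \<bullet> (ch - cc) = 2 * (e \<bullet> d)"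
    by (simp add: grad_theta_def grad_c_def e_def d_def dot_lmul_matrix inner_add_right)
  moreover have "loss Y1 Y2 x y Th cc = (norm (e - d))\<^sup>2"
    by (simp add: loss_def e_def d_def matrix_vector_mult_diff_distrib algebra_simps)
  moreover have "(norm (e - d))\<^sup>2 = (norm e)\<^sup>2 - 2 * (e \<bullet> d) + (norm d)\<^sup>2"
    by (simp add: power2_norm_eq_inner inner_diff_left inner_diff_right inner_commute)
  ultimately show ?thesis
    by (simp add: loss_def e_def[symmetric])
qed

text \<open>Convexity of the loss, compared at the true parameters where it equals \<open>\<parallel>w\<parallel>\<^sup>2\<close>.\<close>
lemma ce_sq_residual_le:
  fixes B :: "real^'n \<Rightarrow> real^'m^'n" and Y1 :: "real^'n \<Rightarrow> real^'p^'n"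
    and Y2 :: "real^'n \<Rightarrow> real^'h^'n" and Th :: "real^'p" and cc :: "real^'h" and wv :: "real^'n"
  assumes "rank (B x) = CARD('n)" "norm wv \<le> W"
  defines "y \<equiv> model Y1 Y2 x Th cc - wv"
  shows "(norm (plant_next f0 B Y1 Y2 Th cc wv x (ce_input B x (Y1 x *v thh + Y2 x *v ch)) - f0 x))\<^sup>2
           \<le> W\<^sup>2 + grad_theta Y1 Y2 x y thh ch \<bullet> (thh - Th) + grad_c Y1 Y2 x y thh ch \<bullet> (ch - cc)"
proof -
  have "(norm (plant_next f0 B Y1 Y2 Th cc wv x (ce_input B x (Y1 x *v thh + Y2 x *v ch)) - f0 x))\<^sup>2
      = loss Y1 Y2 x y thh ch"
    by (simp add: plant_next_ce_input[of B x] assms(1) loss_def y_def)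
  also have "\<dots> \<le> loss Y1 Y2 x y Th cc
      + grad_theta Y1 Y2 x y thh ch \<bullet> (thh - Th) + grad_c Y1 Y2 x y thh ch \<bullet> (ch - cc)"
    by (rule loss_le_linearization)
  also have "loss Y1 Y2 x y Th cc \<le> W\<^sup>2"
    using assms(2) by (simp add: loss_def y_def model_def power_mono)
  finally show ?thesis
    by simp
qed

lemma norm_projball_le: "0 \<le> K \<Longrightarrow> norm (projball K z) \<le> K"
  using closest_point_in_set[of "cball 0 K" z] by (simp add: projball_def)

lemma omac_env_Suc:
  "omac_env f0 B Y1 Y2 Th Kc C2 cc wi thh ch1 (Suc k) =
     (let x = fst (omac_env f0 B Y1 Y2 Th Kc C2 cc wi thh ch1 k);
          ch = snd (omac_env f0 B Y1 Y2 Th Kc C2 cc wi thh ch1 k);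
          y = model Y1 Y2 x Th cc - wi (Suc k)
      in (plant_next f0 B Y1 Y2 Th cc (wi (Suc k)) x (ce_input B x (Y1 x *v thh + Y2 x *v ch)),
          projball Kc (ch - (2 * Kc / (C2 * sqrt (real (Suc k)))) *\<^sub>R grad_c Y1 Y2 x y thh ch)))"
  by (simp add: omac_step_def Let_def)

lemma base_env_Suc:
  "base_env f0 B Y1 Y2 Th KTh Kc C1 C2 cc wi a1 (Suc k) =
     (let x = fst (base_env f0 B Y1 Y2 Th KTh Kc C1 C2 cc wi a1 k);
          a = snd (base_env f0 B Y1 Y2 Th KTh Kc C1 C2 cc wi a1 k);
          y = model Y1 Y2 x Th cc - wi (Suc k)
      in (plant_next f0 B Y1 Y2 Th cc (wi (Suc k)) x (ce_input B x (Y1 x *v fst a + Y2 x *v snd a)),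
          closest_point (cball 0 KTh \<times> cball 0 Kc)
            (a - (2 * sqrt (KTh\<^sup>2 + Kc\<^sup>2) / (sqrt (C1\<^sup>2 + C2\<^sup>2) * sqrt (real (Suc k))))
                   *\<^sub>R (grad_theta Y1 Y2 x y (fst a) (snd a), grad_c Y1 Y2 x y (fst a) (snd a)))))"
  by (simp add: base_step_def Let_def) (intro arg_cong[where f = "closest_point _"], simp add: prod_eq_iff)

lemma norm_snd_omac_env_le:
  assumes "0 \<le> Kc" "norm ch1 \<le> Kc"
  shows "norm (snd (omac_env f0 B Y1 Y2 Th Kc C2 cc wi thh ch1 k)) \<le> Kc"
  using assms by (cases k) (simp_all add: omac_step_def Let_def norm_projball_le)

lemma norm_omac_theta_le:
  assumes "0 \<le> KTh" "norm th1 \<le> KTh"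
  shows "norm (omac_theta f0 B Y1 Y2 Th KTh Kc C1 C2 c w T th1 ch1 j) \<le> KTh"
  using assms by (cases j) (simp_all add: Let_def norm_projball_le)

lemma snd_base_env_in:
  assumes "norm (fst a1) \<le> KTh" "norm (snd a1) \<le> Kc"
  shows "snd (base_env f0 B Y1 Y2 Th KTh Kc C1 C2 cc wi a1 k) \<in> cball 0 KTh \<times> cball 0 Kc"
proof (cases k)
  case (Suc j)
  have "0 \<le> KTh" "0 \<le> Kc"
    using assms norm_ge_zero[of "fst a1"] norm_ge_zero[of "snd a1"] by linarith+
  then have "cball 0 KTh \<times> cball 0 Kc \<noteq> ({} :: ((real^'p) \<times> (real^'h)) set)"
    by simp
  then show ?thesis
    using closest_point_in_set[of "cball 0 KTh \<times> cball 0 Kc"] Suc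
    by (simp add: base_step_def Let_def closed_Times)
qed (use assms in \<open>simp add: mem_Times_iff\<close>)

lemma omac_outer_grad_eq:
  "omac_outer_grad f0 B Y1 Y2 Th Kc C2 cc wi thh ch1 T =
     (\<Sum>t = 1..T. let x = fst (omac_env f0 B Y1 Y2 Th Kc C2 cc wi thh ch1 (t - 1));
                     ch = snd (omac_env f0 B Y1 Y2 Th Kc C2 cc wi thh ch1 (t - 1))
                 in grad_theta Y1 Y2 x (model Y1 Y2 x Th cc - wi t) thh ch)"
  unfolding omac_outer_grad_def
  by (intro sum.cong refl) (auto simp: Let_def omac_step_def dest!: Suc_le_D)

locale linear_parametric_plant =
  fixes f0 :: "real^'n \<Rightarrow> real^'n"
    and B :: "real^'n \<Rightarrow> real^'m^'n"
    and Y1 :: "real^'n \<Rightarrow> real^'p^'n"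
    and Y2 :: "real^'n \<Rightarrow> real^'h^'n"
    and Th :: "real^'p"
    and K1 K2 KTh Kc W C1 C2 :: real
  assumes full_act: "\<And>x. rank (B x) = CARD('n)"
    and Y1_bd: "\<And>x. specnorm (Y1 x) \<le> K1"
    and Y2_bd: "\<And>x. specnorm (Y2 x) \<le> K2"
    and Th_bd: "norm Th \<le> KTh"
    and C1_def: "C1 = 4 * K1\<^sup>2 * KTh + 4 * K1 * K2 * Kc + 2 * K1 * W"
    and C2_def: "C2 = 4 * K2\<^sup>2 * Kc + 4 * K1 * K2 * KTh + 2 * K2 * W"
begin

lemma K1_nonneg: "0 \<le> K1" and K2_nonneg: "0 \<le> K2"
  using Y1_bd[of 0] Y2_bd[of 0] specnorm_nonneg[of "Y1 0"] specnorm_nonneg[of "Y2 0"] by linarith+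

lemma norm_prediction_error_le:
  assumes "norm thh \<le> KTh" "norm ch \<le> Kc" "norm cc \<le> Kc" "norm wv \<le> W"
  shows "norm (Y1 x *v thh + Y2 x *v ch - (model Y1 Y2 x Th cc - wv)) \<le> 2 * K1 * KTh + 2 * K2 * Kc + W"
proof -
  have "norm (thh - Th) \<le> 2 * KTh" "norm (ch - cc) \<le> 2 * Kc"
    using assms Th_bd norm_triangle_ineq4[of thh Th] norm_triangle_ineq4[of ch cc] by linarith+
  then have "norm (Y1 x *v (thh - Th)) \<le> K1 * (2 * KTh)" "norm (Y2 x *v (ch - cc)) \<le> K2 * (2 * Kc)"
    using norm_matrix_vector_le_specnorm[of "Y1 x" "thh - Th"] norm_matrix_vector_le_specnorm[of "Y2 x" "ch - cc"]
      Y1_bd[of x] Y2_bd[of x] K1_nonneg K2_nonneg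
    by (meson mult_mono norm_ge_zero order_trans)+
  moreover have "Y1 x *v thh + Y2 x *v ch - (model Y1 Y2 x Th cc - wv)
      = Y1 x *v (thh - Th) + Y2 x *v (ch - cc) + wv"
    by (simp add: model_def matrix_vector_mult_diff_distrib algebra_simps)
  ultimately show ?thesis
    using assms(4) norm_triangle_ineq[of "Y1 x *v (thh - Th) + Y2 x *v (ch - cc)" wv]
      norm_triangle_ineq[of "Y1 x *v (thh - Th)" "Y2 x *v (ch - cc)"]
    by (simp add: algebra_simps)
qed

lemma norm_grad_theta_le:
  assumes "norm thh \<le> KTh" "norm ch \<le> Kc" "norm cc \<le> Kc" "norm wv \<le> W"
  shows "norm (grad_theta Y1 Y2 x (model Y1 Y2 x Th cc - wv) thh ch) \<le> C1"
proof -
  define e where "e = Y1 x *v thh + Y2 x *v ch - (model Y1 Y2 x Th cc - wv)"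
  have "norm (grad_theta Y1 Y2 x (model Y1 Y2 x Th cc - wv) thh ch) = 2 * norm (transpose (Y1 x) *v e)"
    by (simp add: grad_theta_def e_def)
  also have "\<dots> \<le> 2 * (specnorm (Y1 x) * norm e)"
    by (intro mult_left_mono norm_transpose_vector_le_specnorm) simp
  also have "\<dots> \<le> 2 * (K1 * (2 * K1 * KTh + 2 * K2 * Kc + W))"
    using norm_prediction_error_le[OF assms, of x] Y1_bd[of x] K1_nonneg
    by (simp add: e_def mult_mono)
  also have "\<dots> = C1"
    by (simp add: C1_def power2_eq_square algebra_simps)
  finally show ?thesis .
qed

lemma norm_grad_c_le:
  assumes "norm thh \<le> KTh" "norm ch \<le> Kc" "norm cc \<le> Kc" "norm wv \<le> W"
  shows "norm (grad_c Y1 Y2 x (model Y1 Y2 x Th cc - wv) thh ch) \<le> C2"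
proof -
  define e where "e = Y1 x *v thh + Y2 x *v ch - (model Y1 Y2 x Th cc - wv)"
  have "norm (grad_c Y1 Y2 x (model Y1 Y2 x Th cc - wv) thh ch) = 2 * norm (transpose (Y2 x) *v e)"
    by (simp add: grad_c_def e_def)
  also have "\<dots> \<le> 2 * (specnorm (Y2 x) * norm e)"
    by (intro mult_left_mono norm_transpose_vector_le_specnorm) simp
  also have "\<dots> \<le> 2 * (K2 * (2 * K1 * KTh + 2 * K2 * Kc + W))"
    using norm_prediction_error_le[OF assms, of x] Y2_bd[of x] K2_nonneg
    by (simp add: e_def mult_mono)
  also have "\<dots> = C2"
    by (simp add: C2_def power2_eq_square algebra_simps)
  finally show ?thesis .
qed

abbreviation "omac_traj \<equiv> omac_env f0 B Y1 Y2 Th Kc C2"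
abbreviation "omac_grad \<equiv> omac_outer_grad f0 B Y1 Y2 Th Kc C2"
abbreviation "base_traj \<equiv> base_env f0 B Y1 Y2 Th KTh Kc C1 C2"

lemma norm_omac_outer_grad_le:
  assumes "norm cc \<le> Kc" "\<And>t. norm (wi t) \<le> W" "norm thh \<le> KTh" "norm ch1 \<le> Kc"
  shows "norm (omac_grad cc wi thh ch1 T) \<le> real T * C1"
proof -
  have "0 \<le> Kc"
    using assms(1) norm_ge_zero order_trans by blast
  then have "norm (grad_theta Y1 Y2 x (model Y1 Y2 x Th cc - wi t) thh (snd (omac_traj cc wi thh ch1 k))) \<le> C1"
    for x t k
    using assms norm_snd_omac_env_le norm_grad_theta_le by blast
  then have "norm (omac_grad cc wi thh ch1 T) \<le> (\<Sum>t = 1..T. C1)"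
    unfolding omac_outer_grad_eq Let_def by (intro order_trans[OF norm_sum] sum_mono)
  then show ?thesis
    by simp
qed

text \<open>The inner descent on \<open>c\<close> absorbs the \<open>c\<close>-part of the linearized regret; the
  \<open>\<Theta>\<close>-part stays as a linear term in the outer gradient, to be controlled across
  environments by the outer descent.\<close>

lemma omac_env_sum_sq_residual_le:
  assumes cc: "norm cc \<le> Kc" and wi: "\<And>t. norm (wi t) \<le> W"
    and thh: "norm thh \<le> KTh" and ch1: "norm ch1 \<le> Kc"
  shows "(\<Sum>t = 1..T. (norm (fst (omac_traj cc wi thh ch1 t) - f0 (fst (omac_traj cc wi thh ch1 (t - 1)))))\<^sup>2)
           \<le> real T * W\<^sup>2 + omac_grad cc wi thh ch1 T \<bullet> (thh - Th) + 3 * Kc * C2 * sqrt (real T)"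
proof -
  define X where "X t = fst (omac_traj cc wi thh ch1 (t - 1))" for t
  define CH where "CH t = snd (omac_traj cc wi thh ch1 (t - 1))" for t
  define y where "y t = model Y1 Y2 (X t) Th cc - wi t" for t
  define gc where "gc t = grad_c Y1 Y2 (X t) (y t) thh (CH t)" for t
  have X_Suc: "X (Suc t) = plant_next f0 B Y1 Y2 Th cc (wi t) (X t) (ce_input B (X t) (Y1 (X t) *v thh + Y2 (X t) *v CH t))"
    and CH_Suc: "CH (Suc t) = projball Kc (CH t - (2 * Kc / (C2 * sqrt (real t))) *\<^sub>R gc t)"
    if "t \<ge> 1" for t
    using that omac_env_Suc[of f0 B Y1 Y2 Th Kc C2 cc wi thh ch1 "t - 1"]
    by (simp_all add: X_def CH_def y_def gc_def Let_def)
  have "0 \<le> Kc"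
    using cc norm_ge_zero order_trans by blast
  then have CH_bd: "norm (CH t) \<le> Kc" for t
    using ch1 by (simp add: CH_def norm_snd_omac_env_le)
  have "(\<Sum>t = 1..T. (norm (X (Suc t) - f0 (X t)))\<^sup>2)
      \<le> (\<Sum>t = 1..T. W\<^sup>2 + grad_theta Y1 Y2 (X t) (y t) thh (CH t) \<bullet> (thh - Th) + gc t \<bullet> (CH t - cc))"
    using ce_sq_residual_le[OF full_act wi] by (intro sum_mono) (simp add: X_Suc gc_def y_def)
  also have "\<dots> = real T * W\<^sup>2 + omac_grad cc wi thh ch1 T \<bullet> (thh - Th) + (\<Sum>t = 1..T. gc t \<bullet> (CH t - cc))"
    by (simp add: omac_outer_grad_eq Let_def X_def CH_def y_def sum.distrib inner_sum_left)
  also have "(\<Sum>t = 1..T. gc t \<bullet> (CH t - cc)) \<le> 3 * Kc * C2 * sqrt (real T)"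
    using norm_grad_c_le[OF thh CH_bd cc wi]
    by (intro projected_ogd_regret[of "cball 0 Kc"]) (auto simp: CH_bd cc CH_Suc projball_def gc_def y_def)
  finally show ?thesis
    by (simp add: X_def)
qed

lemma base_env_sum_sq_residual_le:
  assumes cc: "norm cc \<le> Kc" and wi: "\<And>t. norm (wi t) \<le> W"
    and a1: "norm (fst a1) \<le> KTh" "norm (snd a1) \<le> Kc"
  shows "(\<Sum>t = 1..T. (norm (fst (base_traj cc wi a1 t) - f0 (fst (base_traj cc wi a1 (t - 1)))))\<^sup>2)
           \<le> real T * W\<^sup>2 + 3 * sqrt (KTh\<^sup>2 + Kc\<^sup>2) * sqrt (C1\<^sup>2 + C2\<^sup>2) * sqrt (real T)"
proof -
  define S :: "((real^'p) \<times> (real^'h)) set" where "S = cball 0 KTh \<times> cball 0 Kc"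
  define X where "X t = fst (base_traj cc wi a1 (t - 1))" for t
  define A where "A t = snd (base_traj cc wi a1 (t - 1))" for t
  define y where "y t = model Y1 Y2 (X t) Th cc - wi t" for t
  define g where "g t = (grad_theta Y1 Y2 (X t) (y t) (fst (A t)) (snd (A t)),
                         grad_c Y1 Y2 (X t) (y t) (fst (A t)) (snd (A t)))" for t
  have X_Suc: "X (Suc t) = plant_next f0 B Y1 Y2 Th cc (wi t) (X t)
                 (ce_input B (X t) (Y1 (X t) *v fst (A t) + Y2 (X t) *v snd (A t)))"
    and A_Suc: "A (Suc t) = closest_point S
                 (A t - (2 * sqrt (KTh\<^sup>2 + Kc\<^sup>2) / (sqrt (C1\<^sup>2 + C2\<^sup>2) * sqrt (real t))) *\<^sub>R g t)"
    if "t \<ge> 1" for t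
    using that base_env_Suc[of f0 B Y1 Y2 Th KTh Kc C1 C2 cc wi a1 "t - 1"]
    by (simp_all add: X_def A_def y_def g_def S_def Let_def)
  have A_in: "A t \<in> S" for t
    using snd_base_env_in[OF a1] by (simp add: A_def S_def)
  have g_bd: "norm (g t) \<le> sqrt (C1\<^sup>2 + C2\<^sup>2)" for t
    using A_in[of t] norm_grad_theta_le[OF _ _ cc wi] norm_grad_c_le[OF _ _ cc wi]
    by (auto simp: g_def y_def S_def norm_Pair intro!: real_sqrt_le_mono add_mono power_mono)
  have "(\<Sum>t = 1..T. (norm (X (Suc t) - f0 (X t)))\<^sup>2) \<le> (\<Sum>t = 1..T. W\<^sup>2 + g t \<bullet> (A t - (Th, cc)))"
  proof (rule sum_mono)
    fix t
    assume "t \<in> {1..T}"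
    then show "(norm (X (Suc t) - f0 (X t)))\<^sup>2 \<le> W\<^sup>2 + g t \<bullet> (A t - (Th, cc))"
      using ce_sq_residual_le[where B = B and x = "X t" and wv = "wi t", OF full_act wi]
      by (simp add: X_Suc g_def y_def inner_prod_def add.assoc)
  qed
  also have "\<dots> = real T * W\<^sup>2 + (\<Sum>t = 1..T. g t \<bullet> (A t - (Th, cc)))"
    by (simp add: sum.distrib)
  also have "(\<Sum>t = 1..T. g t \<bullet> (A t - (Th, cc)))
      \<le> 3 * sqrt (KTh\<^sup>2 + Kc\<^sup>2) * sqrt (C1\<^sup>2 + C2\<^sup>2) * sqrt (real T)"
  proof (rule projected_ogd_regret[where S = S])
    show "S \<subseteq> cball 0 (sqrt (KTh\<^sup>2 + Kc\<^sup>2))"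
      unfolding S_def by (rule Times_cball_subset_cball)
  qed (use A_in A_Suc g_bd Th_bd cc in \<open>auto simp: S_def closed_Times convex_Times\<close>)
  finally show ?thesis
    by (simp add: X_def)
qed

lemma omac_theta_regret:
  fixes c :: "nat \<Rightarrow> real^'h" and w :: "nat \<Rightarrow> nat \<Rightarrow> real^'n"
    and th1 :: "real^'p" and ch1 :: "nat \<Rightarrow> real^'h" and T :: nat
  assumes w: "\<And>i t. norm (w i t) \<le> W" and c: "\<And>i. norm (c i) \<le> Kc"
    and th1: "norm th1 \<le> KTh" and ch1: "\<And>i. norm (ch1 i) \<le> Kc"
  defines "z i \<equiv> omac_theta f0 B Y1 Y2 Th KTh Kc C1 C2 c w T th1 ch1 (i - 1)"
  shows "(\<Sum>i = 1..N. omac_grad (c i) (w i) (z i) (ch1 i) T \<bullet> (z i - Th))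
           \<le> 3 * KTh * (C1 * real T) * sqrt (real N)"
proof (rule projected_ogd_regret[of "cball 0 KTh"])
  have "0 \<le> KTh"
    using th1 norm_ge_zero order_trans by blast
  then show z_bd: "z i \<in> cball 0 KTh" for i
    using th1 by (simp add: z_def norm_omac_theta_le)
  show "z (Suc i) = closest_point (cball 0 KTh)
          (z i - (2 * KTh / (C1 * real T * sqrt (real i))) *\<^sub>R omac_grad (c i) (w i) (z i) (ch1 i) T)"
    if "i \<ge> 1" for i
    using that by (cases i) (simp_all add: z_def Let_def projball_def)
  show "norm (omac_grad (c i) (w i) (z i) (ch1 i) T) \<le> C1 * real T" for i
    using norm_omac_outer_grad_le[OF c w _ ch1] z_bd[of i] by (simp add: mult.commute)
qed (use Th_bd in auto)

lemma omac_ACE_le: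
  fixes c :: "nat \<Rightarrow> real^'h" and w :: "nat \<Rightarrow> nat \<Rightarrow> real^'n"
  assumes iss: "eISS f0 \<beta> \<gamma> \<rho>" and w: "\<And>i t. norm (w i t) \<le> W" and c: "\<And>i. norm (c i) \<le> Kc"
    and N: "N \<ge> 1" and T: "T \<ge> 1"
    and th1: "norm th1 \<le> KTh" and ch1: "\<And>i. norm (ch1 i) \<le> Kc"
  shows "ACE N T (omac_x f0 B Y1 Y2 Th KTh Kc C1 C2 c w T th1 ch1)
           \<le> \<gamma> / (1 - \<rho>) * sqrt (W\<^sup>2 + 3 * (KTh * C1 * (1 / sqrt (real N)) + Kc * C2 * (1 / sqrt (real T))))"
proof (rule ACE_le_sqrt_mean_sq_residual[OF iss _ _ N T])
  define z where "z i = omac_theta f0 B Y1 Y2 Th KTh Kc C1 C2 c w T th1 ch1 (i - 1)" for i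
  define G where "G i = omac_grad (c i) (w i) (z i) (ch1 i) T" for i
  have "0 \<le> KTh"
    using th1 norm_ge_zero order_trans by blast
  then have z_bd: "norm (z i) \<le> KTh" for i
    using th1 by (simp add: z_def norm_omac_theta_le)
  have "(\<Sum>i = 1..N. \<Sum>t = 1..T. (norm (omac_x f0 B Y1 Y2 Th KTh Kc C1 C2 c w T th1 ch1 i (Suc t)
            - f0 (omac_x f0 B Y1 Y2 Th KTh Kc C1 C2 c w T th1 ch1 i t)))\<^sup>2)
      \<le> (\<Sum>i = 1..N. real T * W\<^sup>2 + G i \<bullet> (z i - Th) + 3 * Kc * C2 * sqrt (real T))"
    using omac_env_sum_sq_residual_le[OF c w z_bd ch1]
    by (intro sum_mono) (simp add: omac_x_def z_def G_def)
  also have "\<dots> = real N * (real T * W\<^sup>2) + (\<Sum>i = 1..N. G i \<bullet> (z i - Th)) + real N * (3 * Kc * C2 * sqrt (real T))"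
    by (simp add: sum.distrib)
  also have "\<dots> \<le> real N * (real T * W\<^sup>2) + 3 * KTh * (C1 * real T) * (real N * (1 / sqrt (real N)))
          + real N * (3 * Kc * C2 * (real T * (1 / sqrt (real T))))"
    using omac_theta_regret[OF w c th1 ch1, where N = N] by (simp add: G_def z_def real_div_sqrt)
  also have "\<dots> = real N * real T * (W\<^sup>2 + 3 * (KTh * C1 * (1 / sqrt (real N)) + Kc * C2 * (1 / sqrt (real T))))"
    by (simp add: algebra_simps)
  finally show "(\<Sum>i = 1..N. \<Sum>t = 1..T. (norm (omac_x f0 B Y1 Y2 Th KTh Kc C1 C2 c w T th1 ch1 i (Suc t)
            - f0 (omac_x f0 B Y1 Y2 Th KTh Kc C1 C2 c w T th1 ch1 i t)))\<^sup>2)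
      \<le> real N * real T * (W\<^sup>2 + 3 * (KTh * C1 * (1 / sqrt (real N)) + Kc * C2 * (1 / sqrt (real T))))" .
qed (simp add: omac_x_def)

lemma base_ACE_le:
  fixes c :: "nat \<Rightarrow> real^'h" and w :: "nat \<Rightarrow> nat \<Rightarrow> real^'n"
  assumes iss: "eISS f0 \<beta> \<gamma> \<rho>" and w: "\<And>i t. norm (w i t) \<le> W" and c: "\<And>i. norm (c i) \<le> Kc"
    and N: "N \<ge> 1" and T: "T \<ge> 1"
    and a1: "\<And>i. norm (fst (a1 i)) \<le> KTh \<and> norm (snd (a1 i)) \<le> Kc"
  shows "ACE N T (base_x f0 B Y1 Y2 Th KTh Kc C1 C2 c w a1)
           \<le> \<gamma> / (1 - \<rho>) * sqrt (W\<^sup>2 + 3 * sqrt (KTh\<^sup>2 + Kc\<^sup>2) * sqrt (C1\<^sup>2 + C2\<^sup>2) * (1 / sqrt (real T)))"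
proof (rule ACE_le_sqrt_mean_sq_residual[OF iss _ _ N T])
  have "(\<Sum>i = 1..N. \<Sum>t = 1..T. (norm (base_x f0 B Y1 Y2 Th KTh Kc C1 C2 c w a1 i (Suc t)
            - f0 (base_x f0 B Y1 Y2 Th KTh Kc C1 C2 c w a1 i t)))\<^sup>2)
      \<le> (\<Sum>i = 1..N. real T * W\<^sup>2 + 3 * sqrt (KTh\<^sup>2 + Kc\<^sup>2) * sqrt (C1\<^sup>2 + C2\<^sup>2) * sqrt (real T))"
    using base_env_sum_sq_residual_le[OF c w a1[THEN conjunct1] a1[THEN conjunct2]]
    by (intro sum_mono) (simp add: base_x_def)
  also have "\<dots> = real N * (real T * W\<^sup>2
      + 3 * sqrt (KTh\<^sup>2 + Kc\<^sup>2) * sqrt (C1\<^sup>2 + C2\<^sup>2) * (real T * (1 / sqrt (real T))))"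
    by (simp add: real_div_sqrt)
  also have "\<dots> = real N * real T * (W\<^sup>2 + 3 * sqrt (KTh\<^sup>2 + Kc\<^sup>2) * sqrt (C1\<^sup>2 + C2\<^sup>2) * (1 / sqrt (real T)))"
    by (simp add: algebra_simps)
  finally show "(\<Sum>i = 1..N. \<Sum>t = 1..T. (norm (base_x f0 B Y1 Y2 Th KTh Kc C1 C2 c w a1 i (Suc t)
            - f0 (base_x f0 B Y1 Y2 Th KTh Kc C1 C2 c w a1 i t)))\<^sup>2)
      \<le> real N * real T * (W\<^sup>2 + 3 * sqrt (KTh\<^sup>2 + Kc\<^sup>2) * sqrt (C1\<^sup>2 + C2\<^sup>2) * (1 / sqrt (real T)))" .
qed (simp add: base_x_def)

end

theorem corollary4:
  fixes f0 :: "real^'n \<Rightarrow> real^'n"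
    and B :: "real^'n \<Rightarrow> real^'m^'n"
    and Y1 :: "real^'n \<Rightarrow> real^'p^'n"
    and Y2 :: "real^'n \<Rightarrow> real^'h^'n"
    and Th :: "real^'p"
    and c :: "nat \<Rightarrow> real^'h"
    and w :: "nat \<Rightarrow> nat \<Rightarrow> real^'n"
    and K1 K2 KTh Kc W \<beta> \<gamma> \<rho> C1 C2 :: real
    and N T :: nat
    and th1 :: "real^'p" and ch1 :: "nat \<Rightarrow> real^'h"
    and a1 :: "nat \<Rightarrow> (real^'p) \<times> (real^'h)"
  assumes full_act: "\<forall>x. rank (B x) = CARD('n)"
    and iss: "eISS f0 \<beta> \<gamma> \<rho>"
    and dist: "\<forall>i t. norm (w i t) \<le> W"
    and Y1_bd: "\<forall>x. specnorm (Y1 x) \<le> K1"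
    and Y2_bd: "\<forall>x. specnorm (Y2 x) \<le> K2"
    and Th_bd: "norm Th \<le> KTh"
    and c_bd: "\<forall>i. norm (c i) \<le> Kc"
    and C1_def: "C1 = 4 * K1\<^sup>2 * KTh + 4 * K1 * K2 * Kc + 2 * K1 * W"
    and C2_def: "C2 = 4 * K2\<^sup>2 * Kc + 4 * K1 * K2 * KTh + 2 * K2 * W"
    and N: "N \<ge> 1" and T: "T \<ge> 1"
    and th1_in: "norm th1 \<le> KTh"
    and ch1_in: "\<forall>i. norm (ch1 i) \<le> Kc"
    and a1_in: "\<forall>i. norm (fst (a1 i)) \<le> KTh \<and> norm (snd (a1 i)) \<le> Kc"
  shows "ACE N T (omac_x f0 B Y1 Y2 Th KTh Kc C1 C2 c w T th1 ch1)
           \<le> \<gamma> / (1 - \<rho>) * sqrt (W\<^sup>2 + 3 * (KTh * C1 * (1 / sqrt (real N))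
                                         + Kc * C2 * (1 / sqrt (real T))))
       \<and> ACE N T (base_x f0 B Y1 Y2 Th KTh Kc C1 C2 c w a1)
           \<le> \<gamma> / (1 - \<rho>) * sqrt (W\<^sup>2 + 3 * sqrt (KTh\<^sup>2 + Kc\<^sup>2) * sqrt (C1\<^sup>2 + C2\<^sup>2)
                                         * (1 / sqrt (real T)))"
proof -
  interpret linear_parametric_plant f0 B Y1 Y2 Th K1 K2 KTh Kc W C1 C2
    using full_act Y1_bd Y2_bd Th_bd C1_def C2_def by unfold_locales auto
  have "ACE N T (omac_x f0 B Y1 Y2 Th KTh Kc C1 C2 c w T th1 ch1)
      \<le> \<gamma> / (1 - \<rho>) * sqrt (W\<^sup>2 + 3 * (KTh * C1 * (1 / sqrt (real N)) + Kc * C2 * (1 / sqrt (real T))))"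
    using dist c_bd ch1_in by (intro omac_ACE_le[OF iss _ _ N T th1_in]) auto
  moreover have "ACE N T (base_x f0 B Y1 Y2 Th KTh Kc C1 C2 c w a1)
      \<le> \<gamma> / (1 - \<rho>) * sqrt (W\<^sup>2 + 3 * sqrt (KTh\<^sup>2 + Kc\<^sup>2) * sqrt (C1\<^sup>2 + C2\<^sup>2) * (1 / sqrt (real T)))"
    using dist c_bd a1_in by (intro base_ACE_le[OF iss _ _ N T]) auto
  ultimately show ?thesis ..
qed

end
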